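(* Let $K\subseteq\mathbb{R}^d$ be a convex body and $\varepsilon>0$, and suppose the width of $K$ in every direction is at least $\varepsilon$. Then for every $i \in I^{\pm}$, $\mathrm{area}(K_i) \le C\cdot \mathrm{area}(K)$, where $C$ is a constant depending only on $d$.
   Context: $d$ is a fixed dimension. $\mathrm{area}(K)$ is the surface area of $K$. For a unit vector $u$, $H^+(u)$ denotes the closed supporting halfspace of $K$ with outer normal $u$ (so $K\subseteq H^+(u)$). Let $e_1,\dots,e_d$ be the coordinate unit vectors, $e_{-j}=-e_j$, and $I^{\pm}=\{\pm1,\dots,\pm d\}$. For $i\in I^\pm$ let $V_i=\{u\in\mathbb{S}^{d-1} : \langle u,e_i\rangle \ge \langle u,e_j\rangle \text{ for all } j\in I^\pm, j\ne i\}$ and $S_i=\bigcap_{u\in V_i}H^+(u)$. Fix $i$ and call $e_i$ the upward vertical direction; let $X_i$ be the hyperplane through the origin orthogonal to $e_i$, and for a point or set $S$ let $S^{\downarrow}$ be its orthogonal projection onto $X_i$. For $\alpha\ge0$ let $K^\downarrow\oplus\alpha$ be the set of points of $X_i$ within Euclidean distance $\alpha$ of $K^\downarrow$, and $K_i^{(\alpha)}=\{x\in S_i: x^\downarrow\in K^\downarrow\oplus\alpha\}$; set $K_i=K_i^{(2\varepsilon)}$. The lower boundary of $K_i$ consists of the boundary points of $K_i$ that have a non-vertical supporting hyperplane, and $\mathrm{area}(K_i)$ denotes the surface area of this lower boundary. *)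

theory Defs
  imports "HOL-Analysis.Analysis"
begin

definition hausdorff_pre :: "nat \<Rightarrow> real \<Rightarrow> ('a::metric_space) set \<Rightarrow> ennreal" where
  "hausdorff_pre s \<delta> A =
     (INF U \<in> {U :: nat \<Rightarrow> 'a set. A \<subseteq> (\<Union>n. U n) \<and> (\<forall>n. diameter (U n) \<le> \<delta>)}.
        (\<Sum>n. (if U n = {} then 0 else ennreal (diameter (U n) ^ s))))"

definition hausdorff_measure :: "nat \<Rightarrow> ('a::metric_space) set \<Rightarrow> ennreal" where
  "hausdorff_measure s A = (SUP \<delta> \<in> {0<..}. hausdorff_pre s \<delta> A)"

definition area :: "(real ^ 'n) set \<Rightarrow> ennreal" where
  "area A = hausdorff_measure (CARD('n) - 1) A"

definition support_fun :: "(real ^ 'n) set \<Rightarrow> real ^ 'n \<Rightarrow> real" where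
  "support_fun K u = Sup ((\<lambda>y. y \<bullet> u) ` K)"

definition width :: "(real ^ 'n) set \<Rightarrow> real ^ 'n \<Rightarrow> real" where
  "width K u = support_fun K u + support_fun K (- u)"

definition convex_body :: "(real ^ 'n) set \<Rightarrow> bool" where
  "convex_body K \<longleftrightarrow> compact K \<and> convex K \<and> interior K \<noteq> {}"

text \<open>An index i in I^\<pm> is a pair (j, s) with j a coordinate and s \<in> {1,-1};
  e_i = s e_j.\<close>
definition Ipm :: "('n::finite \<times> real) set" where
  "Ipm = {(j, s). s = 1 \<or> s = -1}"

definition sdir :: "'n::finite \<Rightarrow> real \<Rightarrow> real ^ 'n" where
  "sdir j s = s *\<^sub>R axis j 1"

definition Vset :: "'n::finite \<Rightarrow> real \<Rightarrow> (real ^ 'n) set" where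
  "Vset j s = {u. norm u = 1 \<and>
     (\<forall>k t. (k, t) \<in> Ipm \<and> (k, t) \<noteq> (j, s) \<longrightarrow> u \<bullet> sdir k t \<le> u \<bullet> sdir j s)}"

definition Hplus :: "(real ^ 'n) set \<Rightarrow> real ^ 'n \<Rightarrow> (real ^ 'n) set" where
  "Hplus K u = {x. x \<bullet> u \<le> support_fun K u}"

definition Sreg :: "(real ^ 'n) set \<Rightarrow> 'n::finite \<Rightarrow> real \<Rightarrow> (real ^ 'n) set" where
  "Sreg K j s = (\<Inter>u \<in> Vset j s. Hplus K u)"

definition proj :: "'n::finite \<Rightarrow> real ^ 'n \<Rightarrow> real ^ 'n" where
  "proj j x = x - (x $ j) *\<^sub>R axis j 1"

definition thicken :: "'n::finite \<Rightarrow> (real ^ 'n) set \<Rightarrow> real \<Rightarrow> (real ^ 'n) set" where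
  "thicken j A \<alpha> = {p. p $ j = 0 \<and> infdist p A \<le> \<alpha>}"

definition Kalpha :: "(real ^ 'n) set \<Rightarrow> 'n::finite \<Rightarrow> real \<Rightarrow> real \<Rightarrow> (real ^ 'n) set" where
  "Kalpha K j s \<alpha> = {x \<in> Sreg K j s. proj j x \<in> thicken j (proj j ` K) \<alpha>}"

definition lower_boundary :: "'n::finite \<Rightarrow> (real ^ 'n) set \<Rightarrow> (real ^ 'n) set" where
  "lower_boundary j A = {x \<in> frontier A. \<exists>a. a \<noteq> 0 \<and> a $ j \<noteq> 0 \<and> (\<forall>y\<in>A. y \<bullet> a \<le> x \<bullet> a)}"

end

theory Submission
  imports Defs
begin

text \<open>Let \<open>h(p)\<close> be the height of the top of \<open>S_i\<close> above a point \<open>p\<close> of \<open>X_i\<close>. Every normal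
  \<open>u \<in> V_i\<close> satisfies \<open>u \<cdot> e_i \<ge> 1/\<surd>d\<close>, so \<open>h\<close> is \<open>\<surd>d\<close>-Lipschitz, and the lower boundary of
  \<open>K_i\<close> lies on the graph of \<open>h\<close> over \<open>K\<^sup>\<down> \<oplus> 2\<epsilon>\<close>. Since all widths of \<open>K\<close> are at least \<open>\<epsilon>\<close>, \<open>K\<close>
  contains a ball of radius \<open>\<epsilon>/(d+1)\<close> about the centroid of a simplex of maximal volume in
  \<open>K\<close>; so \<open>K\<^sup>\<down>\<close> contains a \<open>(d-1)\<close>-ball of that radius and \<open>K\<^sup>\<down> \<oplus> 2\<epsilon>\<close> lies in the image of
  \<open>K\<^sup>\<down>\<close> under a homothety of ratio \<open>2d+3\<close>. As \<open>K\<^sup>\<down>\<close> is also the shadow of \<open>\<partial>K\<close>, the lower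
  boundary of \<open>K_i\<close> is covered by the image of \<open>\<partial>K\<close> under a \<open>(1+\<surd>d)(2d+3)\<close>-Lipschitz map, and
  such a map increases the \<open>(d-1)\<close>-dimensional Hausdorff measure by at most the factor
  \<open>((1+\<surd>d)(2d+3))^(d-1)\<close>.\<close>

section \<open>Hausdorff measure of Lipschitz images\<close>

text \<open>For an unbounded set, \<^const>\<open>diameter\<close> is the junk value \<open>Sup\<close> of a set of reals that is
  not bounded above, which does not depend on the set. Covers by unbounded sets are therefore
  harmless in the estimates below, but must be mapped to unbounded sets again.\<close>
lemma diameter_unbounded_eq:
  fixes S :: "'a::metric_space set" and T :: "'b::metric_space set"
  assumes "\<not> bounded S" "\<not> bounded T"
  shows "diameter S = diameter T"
proof -
  have not_bdd: "\<not> bdd_above (case_prod dist ` (S \<times> S))"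
    if unbdd: "\<not> bounded S" for S :: "'c::metric_space set"
  proof
    assume "bdd_above (case_prod dist ` (S \<times> S))"
    then obtain M where M: "\<And>x y. x \<in> S \<Longrightarrow> y \<in> S \<Longrightarrow> dist x y \<le> M"
      unfolding bdd_above_def by fastforce
    obtain a where "a \<in> S" using unbdd by (metis bounded_empty ex_in_conv)
    then have "bounded S" unfolding bounded_def using M by blast
    with unbdd show False by simp
  qed
  have Sup_eq: "Sup X = Sup Y" if "\<not> bdd_above X" "\<not> bdd_above Y" for X Y :: "real set"
  proof -
    have "(\<lambda>z. \<forall>x\<in>X. x \<le> z) = (\<lambda>z. \<forall>y\<in>Y. y \<le> z)"
      using that unfolding bdd_above_def by (auto simp: fun_eq_iff)
    then show ?thesis unfolding Sup_real_def by simp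
  qed
  have "S \<noteq> {}" "T \<noteq> {}" using assms by auto
  then show ?thesis
    unfolding diameter_def using Sup_eq[OF not_bdd[OF assms(1)] not_bdd[OF assms(2)]] by simp
qed

definition hausdorff_cost :: "nat \<Rightarrow> 'a::metric_space set \<Rightarrow> ennreal" where
  "hausdorff_cost s U = (if U = {} then 0 else ennreal (diameter U ^ s))"

lemma hausdorff_pre_eq_cost:
  "hausdorff_pre s \<delta> A =
     (INF U \<in> {U. A \<subseteq> (\<Union>n. U n) \<and> (\<forall>n. diameter (U n) \<le> \<delta>)}. \<Sum>n. hausdorff_cost s (U n))"
  unfolding hausdorff_pre_def hausdorff_cost_def ..

lemma diameter_lipschitz_image:
  fixes f :: "'a::metric_space \<Rightarrow> 'b::real_normed_vector"
  assumes f: "L-lipschitz_on S f" and S: "bounded S"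
  shows "bounded (f ` S)" and "diameter (f ` S) \<le> L * diameter S"
proof -
  have dist_le: "dist x y \<le> L * diameter S" if "x \<in> f ` S" "y \<in> f ` S" for x y
  proof -
    from that obtain a b where ab: "a \<in> S" "b \<in> S" "x = f a" "y = f b" by auto
    have "dist x y \<le> L * dist a b" using lipschitz_onD[OF f] ab by auto
    also have "\<dots> \<le> L * diameter S"
      using diameter_bounded_bound[OF S ab(1,2)] lipschitz_on_nonneg[OF f] by (rule mult_left_mono)
    finally show ?thesis .
  qed
  show "bounded (f ` S)"
  proof (cases "S = {}")
    case False
    then obtain a where "a \<in> S" by blast
    then show ?thesis unfolding bounded_def using dist_le by blast
  qed simp
  show "diameter (f ` S) \<le> L * diameter S"
    using dist_le lipschitz_on_nonneg[OF f] diameter_ge_0[OF S]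
    by (intro diameter_le) (auto simp: dist_norm)
qed

lemma hausdorff_cost_lipschitz_image:
  fixes f :: "'a::metric_space \<Rightarrow> 'b::{real_normed_vector,perfect_space}"
  assumes f: "L-lipschitz_on A f" and L: "L \<ge> 1" and \<delta>: "\<delta> \<ge> 0" and U: "diameter U \<le> \<delta>"
  defines "V \<equiv> if bounded U then f ` (U \<inter> A) else UNIV"
  shows "diameter V \<le> L * \<delta>" and "hausdorff_cost s V \<le> ennreal (L ^ s) * hausdorff_cost s U"
proof -
  have "diameter V \<le> L * \<delta> \<and> hausdorff_cost s V \<le> ennreal (L ^ s) * hausdorff_cost s U"
  proof (cases "bounded U")
    case bdd: True
    have f': "L-lipschitz_on (U \<inter> A) f" using f by (rule lipschitz_on_subset) auto
    have bdd': "bounded (U \<inter> A)" using bdd by (rule bounded_subset) auto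
    have "diameter V \<le> L * diameter (U \<inter> A)"
      unfolding V_def using bdd diameter_lipschitz_image(2)[OF f' bdd'] by simp
    also have "\<dots> \<le> L * diameter U"
      using diameter_subset[OF _ bdd, of "U \<inter> A"] L by (intro mult_left_mono) auto
    finally have diam: "diameter V \<le> L * diameter U" .
    have "0 \<le> diameter V"
      unfolding V_def using bdd diameter_ge_0[OF diameter_lipschitz_image(1)[OF f' bdd']] by simp
    with diam have "diameter V ^ s \<le> (L * diameter U) ^ s" by (rule power_mono)
    then have "hausdorff_cost s V \<le> ennreal (L ^ s) * hausdorff_cost s U"
      unfolding hausdorff_cost_def V_def using bdd L diameter_ge_0[OF bdd]
      by (auto simp: ennreal_mult[symmetric] power_mult_distrib)
    moreover have "diameter V \<le> L * \<delta>" using diam U L by (simp add: order_trans)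
    ultimately show ?thesis by simp
  next
    case False
    have eq: "diameter V = diameter U"
      unfolding V_def using False diameter_unbounded_eq[OF not_bounded_UNIV False] by simp
    have "1 \<le> ennreal (L ^ s)" using L by (simp add: one_le_power)
    from mult_right_mono[OF this zero_le]
    have "hausdorff_cost s U \<le> ennreal (L ^ s) * hausdorff_cost s U" by simp
    moreover have "hausdorff_cost s V = hausdorff_cost s U"
      using eq False unfolding hausdorff_cost_def V_def by auto
    moreover have "diameter V \<le> L * \<delta>" using eq U mult_right_mono[OF L \<delta>] by simp
    ultimately show ?thesis by simp
  qed
  then show "diameter V \<le> L * \<delta>" "hausdorff_cost s V \<le> ennreal (L ^ s) * hausdorff_cost s U"
    by auto
qed

lemma hausdorff_pre_lipschitz_image:
  fixes f :: "'a::metric_space \<Rightarrow> 'b::{real_normed_vector,perfect_space}"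
  assumes f: "L-lipschitz_on A f" and L: "L \<ge> 1" and \<delta>: "\<delta> > 0"
  shows "hausdorff_pre s (L * \<delta>) (f ` A) \<le> ennreal (L ^ s) * hausdorff_pre s \<delta> A"
proof -
  define c where "c = ennreal (L ^ s)"
  define c' where "c' = ennreal (1 / L ^ s)"
  have c'c: "c' * c = 1"
    unfolding c_def c'_def using L by (simp add: ennreal_mult''[symmetric])
  let ?P = "hausdorff_pre s (L * \<delta>) (f ` A)"
  have "c' * ?P \<le> hausdorff_pre s \<delta> A"
    unfolding hausdorff_pre_eq_cost[of s \<delta>]
  proof (rule INF_greatest, safe)
    fix U :: "nat \<Rightarrow> 'a set"
    assume A: "A \<subseteq> (\<Union>n. U n)" and U: "\<forall>n. diameter (U n) \<le> \<delta>"
    define V where "V n = (if bounded (U n) then f ` (U n \<inter> A) else UNIV)" for n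
    note V = hausdorff_cost_lipschitz_image[OF f L less_imp_le[OF \<delta>] spec[OF U], folded V_def]
    have cover: "f ` A \<subseteq> (\<Union>n. V n)"
      using A unfolding V_def by (fastforce split: if_splits)
    have "?P \<le> (\<Sum>n. hausdorff_cost s (V n))"
      unfolding hausdorff_pre_eq_cost by (rule INF_lower) (use cover V in auto)
    also have "\<dots> \<le> (\<Sum>n. c * hausdorff_cost s (U n))"
      unfolding c_def by (intro suminf_le V) auto
    also have "\<dots> = c * (\<Sum>n. hausdorff_cost s (U n))" by simp
    finally have "c' * ?P \<le> c' * (c * (\<Sum>n. hausdorff_cost s (U n)))"
      by (rule mult_left_mono) simp
    then show "c' * ?P \<le> (\<Sum>n. hausdorff_cost s (U n))"
      using c'c by (simp add: mult.assoc[symmetric])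
  qed
  then have "c * (c' * ?P) \<le> c * hausdorff_pre s \<delta> A" by (rule mult_left_mono) simp
  then show ?thesis using c'c unfolding c_def by (simp add: mult.assoc[symmetric] mult.commute)
qed

lemma hausdorff_measure_lipschitz_image:
  fixes f :: "'a::metric_space \<Rightarrow> 'b::{real_normed_vector,perfect_space}"
  assumes f: "L-lipschitz_on A f" and L: "L \<ge> 1"
  shows "hausdorff_measure s (f ` A) \<le> ennreal (L ^ s) * hausdorff_measure s A"
  unfolding hausdorff_measure_def
proof (rule SUP_least)
  fix \<delta> :: real assume "\<delta> \<in> {0<..}"
  then have \<delta>: "\<delta> / L > 0" using L by simp
  have "hausdorff_pre s \<delta> (f ` A) = hausdorff_pre s (L * (\<delta> / L)) (f ` A)" using L by simp
  also have "\<dots> \<le> ennreal (L ^ s) * hausdorff_pre s (\<delta> / L) A"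
    by (rule hausdorff_pre_lipschitz_image[OF f L \<delta>])
  also have "\<dots> \<le> ennreal (L ^ s) * (SUP \<delta>\<in>{0<..}. hausdorff_pre s \<delta> A)"
    by (intro mult_left_mono SUP_upper) (use \<delta> in auto)
  finally show "hausdorff_pre s \<delta> (f ` A) \<le> ennreal (L ^ s) * (SUP \<delta>\<in>{0<..}. hausdorff_pre s \<delta> A)" .
qed

lemma hausdorff_measure_mono:
  assumes "A \<subseteq> B"
  shows "hausdorff_measure s A \<le> hausdorff_measure s B"
  unfolding hausdorff_measure_def hausdorff_pre_def
  by (intro SUP_mono' INF_superset_mono) (use assms in auto)

section \<open>The height function of \<open>S_i\<close>\<close>

lemma Ipm_iff [simp]: "(j, s) \<in> Ipm \<longleftrightarrow> s = 1 \<or> s = -1"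
  unfolding Ipm_def by auto

lemma inner_sdir: "u \<bullet> sdir k t = t * u $ k"
  unfolding sdir_def by (simp add: inner_axis)

lemma sdir_nth: "sdir k t $ i = (if i = k then t else 0)"
  unfolding sdir_def by (simp add: axis_def)

lemma norm_sdir: "s = 1 \<or> s = -1 \<Longrightarrow> norm (sdir j s) = 1"
  unfolding sdir_def by auto

lemma inner_add_scaleR_sdir: "(p + t *\<^sub>R sdir j s) \<bullet> u = p \<bullet> u + t * (u \<bullet> sdir j s)"
  by (simp add: inner_add_left inner_add_right inner_commute[of _ u])

lemma proj_nth: "proj j x $ i = (if i = j then 0 else x $ i)"
  unfolding proj_def by (simp add: axis_def)

lemma proj_add_sdir [simp]: "proj j (x + t *\<^sub>R sdir j s) = proj j x"
  by (simp add: vec_eq_iff proj_nth sdir_nth)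

lemma proj_diff: "proj j (x - y) = proj j x - proj j y"
  by (simp add: vec_eq_iff proj_nth)

lemma proj_proj [simp]: "proj j (proj j x) = proj j x"
  by (simp add: vec_eq_iff proj_nth)

lemma linear_proj: "linear (proj j)"
  by (rule linearI) (simp_all add: vec_eq_iff proj_nth)

lemma proj_lipschitz: "1-lipschitz_on A (proj j)"
proof (rule lipschitz_onI)
  show "dist (proj j x) (proj j y) \<le> 1 * dist x y" for x y
    unfolding dist_norm proj_diff[symmetric]
    by (simp add: norm_le_componentwise_cart proj_nth)
qed simp

lemma proj_add_vertical_part:
  "s = 1 \<or> s = -1 \<Longrightarrow> proj j x + (s * x $ j) *\<^sub>R sdir j s = x"
  by (auto simp: vec_eq_iff proj_nth sdir_nth)

lemma Vset_abs_le_inner_sdir: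
  assumes u: "u \<in> Vset j s" and s: "s = 1 \<or> s = -1"
  shows "\<bar>u $ k\<bar> \<le> u \<bullet> sdir j s"
proof -
  have V: "t * u $ k \<le> s * u $ j" if "t = 1 \<or> t = -1" "(k, t) \<noteq> (j, s)" for k t
    using u that unfolding Vset_def by (auto simp: inner_sdir)
  show ?thesis
  proof (cases "k = j")
    case True
    with V[of "-s" j] s show ?thesis by (auto simp: inner_sdir)
  next
    case False
    with V[of 1 k] V[of "-1" k] show ?thesis by (auto simp: inner_sdir)
  qed
qed

lemma Vset_inner_sdir_nonneg: "u \<in> Vset j s \<Longrightarrow> s = 1 \<or> s = -1 \<Longrightarrow> 0 \<le> u \<bullet> sdir j s"
  using Vset_abs_le_inner_sdir abs_ge_zero order_trans by blast

lemma Vset_inner_sdir_ge: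
  fixes u :: "real ^ 'n"
  assumes u: "u \<in> Vset j s" and s: "s = 1 \<or> s = -1"
  shows "1 \<le> sqrt (real CARD('n)) * (u \<bullet> sdir j s)"
proof -
  let ?\<sigma> = "u \<bullet> sdir j s"
  have \<sigma>: "0 \<le> ?\<sigma>" using Vset_inner_sdir_nonneg[OF u s] .
  have "1 = u \<bullet> u" using u unfolding Vset_def by (simp add: dot_square_norm)
  also have "\<dots> = (\<Sum>i\<in>UNIV. u $ i * u $ i)" by (simp add: inner_vec_def)
  also have "\<dots> \<le> (\<Sum>i\<in>(UNIV::'n set). ?\<sigma> * ?\<sigma>)"
  proof (rule sum_mono)
    fix i :: 'n
    have "\<bar>u $ i\<bar> * \<bar>u $ i\<bar> \<le> ?\<sigma> * ?\<sigma>"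
      using Vset_abs_le_inner_sdir[OF u s] \<sigma> by (intro mult_mono) auto
    then show "u $ i * u $ i \<le> ?\<sigma> * ?\<sigma>" by (simp add: abs_mult_self_eq)
  qed
  also have "\<dots> = (sqrt (real CARD('n)) * ?\<sigma>)\<^sup>2" by (simp add: power2_eq_square)
  finally show ?thesis
    using \<sigma> abs_le_square_iff[of 1 "sqrt (real CARD('n)) * ?\<sigma>"] by simp
qed

lemma sdir_in_Vset: "s = 1 \<or> s = -1 \<Longrightarrow> sdir j s \<in> Vset j s"
  unfolding Vset_def by (auto simp: norm_sdir inner_sdir sdir_nth)

lemma mem_Sreg_iff: "x \<in> Sreg K j s \<longleftrightarrow> (\<forall>u\<in>Vset j s. x \<bullet> u \<le> support_fun K u)"
  unfolding Sreg_def Hplus_def by auto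

lemma closed_Sreg: "closed (Sreg K j s)"
  unfolding Sreg_def Hplus_def
  by (intro closed_INT ballI) (simp add: inner_commute closed_halfspace_le)

lemma inner_le_support_fun:
  assumes "bounded K" "y \<in> K"
  shows "y \<bullet> u \<le> support_fun K u"
proof -
  obtain B where B: "\<And>x. x \<in> K \<Longrightarrow> norm x \<le> B" using assms(1) bounded_iff by blast
  have "x \<bullet> u \<le> B * norm u" if "x \<in> K" for x
    using Cauchy_Schwarz_ineq2[of x u] B[OF that] by (smt (verit) mult_right_mono norm_ge_zero)
  then have "bdd_above ((\<lambda>y. y \<bullet> u) ` K)" by (intro bdd_aboveI[where M = "B * norm u"]) auto
  then show ?thesis unfolding support_fun_def using assms(2) by (auto intro: cSup_upper)
qed

lemma subset_Sreg: "bounded K \<Longrightarrow> K \<subseteq> Sreg K j s"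
  by (auto simp: mem_Sreg_iff inner_le_support_fun)

lemma Sreg_vertical_shift:
  fixes K :: "(real ^ 'n) set"
  assumes s: "s = 1 \<or> s = -1" and p: "p + t *\<^sub>R sdir j s \<in> Sreg K j s"
    and t': "t' \<le> t - sqrt (real CARD('n)) * dist p q"
  shows "q + t' *\<^sub>R sdir j s \<in> Sreg K j s"
  unfolding mem_Sreg_iff
proof
  fix u assume u: "u \<in> Vset j s"
  let ?\<sigma> = "u \<bullet> sdir j s"
  have "norm u = 1" using u unfolding Vset_def by simp
  then have "(q - p) \<bullet> u \<le> dist p q * 1"
    using Cauchy_Schwarz_ineq2[of "q - p" u] by (simp add: dist_norm norm_minus_commute)
  also have "\<dots> \<le> dist p q * (sqrt (real CARD('n)) * ?\<sigma>)"
    using Vset_inner_sdir_ge[OF u s] by (intro mult_left_mono) auto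
  moreover have "t' * ?\<sigma> \<le> (t - sqrt (real CARD('n)) * dist p q) * ?\<sigma>"
    using t' Vset_inner_sdir_nonneg[OF u s] by (rule mult_right_mono)
  ultimately have "q \<bullet> u + t' * ?\<sigma> \<le> p \<bullet> u + t * ?\<sigma>"
    by (simp add: inner_diff_left algebra_simps)
  also have "\<dots> \<le> support_fun K u"
    using p u unfolding mem_Sreg_iff inner_add_scaleR_sdir by blast
  finally show "(q + t' *\<^sub>R sdir j s) \<bullet> u \<le> support_fun K u"
    unfolding inner_add_scaleR_sdir .
qed

lemma Sreg_vertical_bound:
  assumes s: "s = 1 \<or> s = -1" and t: "p + t *\<^sub>R sdir j s \<in> Sreg K j s"
  shows "t \<le> support_fun K (sdir j s) - p \<bullet> sdir j s"
proof -
  have "(p + t *\<^sub>R sdir j s) \<bullet> sdir j s \<le> support_fun K (sdir j s)"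
    using t sdir_in_Vset[OF s] unfolding mem_Sreg_iff by blast
  moreover have "sdir j s \<bullet> sdir j s = 1" using s by (auto simp: inner_sdir sdir_nth)
  ultimately show ?thesis unfolding inner_add_scaleR_sdir by simp
qed

definition Sreg_height :: "(real ^ 'n) set \<Rightarrow> 'n::finite \<Rightarrow> real \<Rightarrow> real ^ 'n \<Rightarrow> real" where
  "Sreg_height K j s p = Sup {t. p + t *\<^sub>R sdir j s \<in> Sreg K j s}"

definition Sreg_graph :: "(real ^ 'n) set \<Rightarrow> 'n::finite \<Rightarrow> real \<Rightarrow> real ^ 'n \<Rightarrow> real ^ 'n" where
  "Sreg_graph K j s p = p + Sreg_height K j s p *\<^sub>R sdir j s"

lemma Sreg_height_lipschitz:
  fixes K :: "(real ^ 'n) set"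
  assumes K: "bounded K" "K \<noteq> {}" and s: "s = 1 \<or> s = -1"
  shows "(sqrt (real CARD('n)))-lipschitz_on A (Sreg_height K j s)"
proof -
  let ?T = "\<lambda>p. {t. p + t *\<^sub>R sdir j s \<in> Sreg K j s}"
  have nonempty: "?T p \<noteq> {}" for p
  proof -
    obtain y where "y \<in> K" using K by auto
    then have "proj j y + (s * y $ j) *\<^sub>R sdir j s \<in> Sreg K j s"
      using subset_Sreg[OF K(1), of j s] proj_add_vertical_part[OF s, of j y] by auto
    from Sreg_vertical_shift[OF s this order_refl] show ?thesis by blast
  qed
  have bdd: "bdd_above (?T p)" for p
    using Sreg_vertical_bound[OF s] by (intro bdd_aboveI) auto
  have le: "Sreg_height K j s p \<le> Sreg_height K j s q + sqrt (real CARD('n)) * dist p q" for p q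
    unfolding Sreg_height_def
  proof (rule cSup_least[OF nonempty])
    fix t assume "t \<in> ?T p"
    then have "t - sqrt (real CARD('n)) * dist p q \<in> ?T q"
      using Sreg_vertical_shift[OF s] by blast
    then show "t \<le> Sup (?T q) + sqrt (real CARD('n)) * dist p q"
      using cSup_upper[OF _ bdd] by fastforce
  qed
  show ?thesis
  proof (rule lipschitz_onI)
    show "dist (Sreg_height K j s p) (Sreg_height K j s q) \<le> sqrt (real CARD('n)) * dist p q" for p q
      using le[of p q] le[of q p] by (simp add: dist_real_def dist_commute abs_le_iff)
  qed simp
qed

lemma Sreg_graph_lipschitz:
  fixes K :: "(real ^ 'n) set"
  assumes K: "bounded K" "K \<noteq> {}" and s: "s = 1 \<or> s = -1"
  shows "(1 + sqrt (real CARD('n)))-lipschitz_on A (Sreg_graph K j s)"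
proof (rule lipschitz_onI)
  fix a b :: "real ^ 'n"
  let ?h = "Sreg_height K j s"
  have "dist (Sreg_graph K j s a) (Sreg_graph K j s b) = norm ((a - b) + (?h a - ?h b) *\<^sub>R sdir j s)"
    unfolding Sreg_graph_def dist_norm by (simp add: algebra_simps)
  also have "\<dots> \<le> dist a b + \<bar>?h a - ?h b\<bar>"
    using norm_triangle_ineq[of "a - b" "(?h a - ?h b) *\<^sub>R sdir j s"] norm_sdir[OF s, of j]
    by (simp add: dist_norm)
  also have "\<bar>?h a - ?h b\<bar> \<le> sqrt (real CARD('n)) * dist a b"
    using lipschitz_onD[OF Sreg_height_lipschitz[OF K s], of a UNIV b] by (simp add: dist_real_def)
  finally show "dist (Sreg_graph K j s a) (Sreg_graph K j s b) \<le> (1 + sqrt (real CARD('n))) * dist a b"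
    by (simp add: algebra_simps)
qed simp

lemma closed_Kalpha: "closed (Kalpha K j s \<alpha>)"
proof -
  have eq: "Kalpha K j s \<alpha> = Sreg K j s \<inter> {x. infdist (proj j x) (proj j ` K) \<le> \<alpha>}"
    unfolding Kalpha_def thicken_def by (auto simp: proj_nth)
  have "continuous_on UNIV (proj j)"
    using linear_proj linear_continuous_on linear_conv_bounded_linear by blast
  then have "closed {x. infdist (proj j x) (proj j ` K) \<le> \<alpha>}"
    by (intro closed_Collect_le continuous_on_infdist continuous_on_const) auto
  then show ?thesis unfolding eq by (intro closed_Int closed_Sreg)
qed

text \<open>A non-vertical supporting hyperplane at \<open>x\<close> must have its normal pointing upwards, since
  \<open>K_i\<close> contains the points of \<open>S_i\<close> directly below \<open>x\<close>; hence \<open>x\<close> is the top of \<open>S_i\<close> on its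
  vertical line.\<close>
lemma lower_boundary_Kalpha_subset_graph:
  assumes s: "s = 1 \<or> s = -1"
  shows "lower_boundary j (Kalpha K j s \<alpha>) \<subseteq> Sreg_graph K j s ` thicken j (proj j ` K) \<alpha>"
proof
  fix x assume x: "x \<in> lower_boundary j (Kalpha K j s \<alpha>)"
  then obtain a where a: "a $ j \<noteq> 0" and supp: "\<And>y. y \<in> Kalpha K j s \<alpha> \<Longrightarrow> y \<bullet> a \<le> x \<bullet> a"
    unfolding lower_boundary_def by auto
  have "x \<in> Kalpha K j s \<alpha>"
    using x frontier_subset_closed[OF closed_Kalpha] unfolding lower_boundary_def by blast
  then have xS: "x \<in> Sreg K j s" and thick: "proj j x \<in> thicken j (proj j ` K) \<alpha>"
    unfolding Kalpha_def by auto
  define p \<tau> where "p = proj j x" and "\<tau> = s * x $ j"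
  have x_eq: "x = p + \<tau> *\<^sub>R sdir j s"
    unfolding p_def \<tau>_def by (rule proj_add_vertical_part[OF s, symmetric])
  have line_le: "(p + t *\<^sub>R sdir j s) \<bullet> a \<le> x \<bullet> a" if "p + t *\<^sub>R sdir j s \<in> Sreg K j s" for t
    using supp that thick unfolding Kalpha_def p_def by simp
  have "p + (\<tau> - 1) *\<^sub>R sdir j s \<in> Sreg K j s"
    using Sreg_vertical_shift[OF s xS[unfolded x_eq], of "\<tau> - 1" p] by simp
  from line_le[OF this] have "0 \<le> a \<bullet> sdir j s"
    unfolding x_eq inner_add_scaleR_sdir by (simp add: algebra_simps)
  moreover have "a \<bullet> sdir j s \<noteq> 0" using a s by (auto simp: inner_sdir)
  ultimately have up: "0 < a \<bullet> sdir j s" by simp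
  have "t \<le> \<tau>" if "p + t *\<^sub>R sdir j s \<in> Sreg K j s" for t
    using line_le[OF that] up unfolding x_eq inner_add_scaleR_sdir by simp
  moreover have "p + \<tau> *\<^sub>R sdir j s \<in> Sreg K j s" using xS x_eq by simp
  ultimately have "Sreg_height K j s p = \<tau>"
    unfolding Sreg_height_def by (intro cSup_eq_maximum) auto
  then have "x = Sreg_graph K j s p" unfolding Sreg_graph_def x_eq by simp
  then show "x \<in> Sreg_graph K j s ` thicken j (proj j ` K) \<alpha>"
    using thick unfolding p_def by blast
qed

section \<open>Inscribed balls from simplices of maximal volume\<close>

lemma sum_UNIV_option: "(\<Sum>k\<in>(UNIV :: 'a::finite option set). f k) = f None + (\<Sum>i\<in>UNIV. f (Some i))"
  by (simp add: UNIV_option_conv sum.reindex)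

text \<open>The columns are the vertices \<open>W $ k\<close> lifted to \<open>(1, W $ k)\<close>, so \<open>\<bar>det\<bar>\<close> is \<open>d!\<close> times the
  volume of their simplex, and the solutions \<open>l\<close> of \<open>simplex_matrix W *v l = (1, p)\<close> are the
  barycentric coordinates of \<open>p\<close>.\<close>
definition simplex_matrix :: "real ^ 'n ^ ('n::finite option) \<Rightarrow> real ^ ('n option) ^ ('n option)" where
  "simplex_matrix W = (\<chi> i k. case i of None \<Rightarrow> 1 | Some r \<Rightarrow> W $ k $ r)"

lemma simplex_matrix_mult_None: "(simplex_matrix W *v l) $ None = (\<Sum>k\<in>UNIV. l $ k)"
  by (simp add: matrix_vector_mult_def simplex_matrix_def)

lemma simplex_matrix_mult_Some: "(simplex_matrix W *v l) $ Some r = (\<Sum>k\<in>UNIV. l $ k *\<^sub>R W $ k) $ r"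
  by (simp add: matrix_vector_mult_def simplex_matrix_def mult.commute)

lemma continuous_on_det_simplex_matrix: "continuous_on S (\<lambda>W. det (simplex_matrix W))"
proof -
  have entries: "continuous_on S (\<lambda>W. simplex_matrix W $ i $ k)" for i k
    by (cases i) (auto simp: simplex_matrix_def intro!: continuous_intros)
  show ?thesis unfolding det_def by (intro continuous_intros entries)
qed

lemma compact_vertex_tuples:
  fixes K :: "'a::euclidean_space set"
  assumes "compact K"
  shows "compact {W :: 'a ^ 'm::finite. \<forall>k. W $ k \<in> K}"
proof -
  have "closed {W :: 'a ^ 'm. \<forall>k. W $ k \<in> K}"
    using assms by (simp add: closed_vector_box compact_imp_closed)
  moreover obtain B where B: "\<And>x. x \<in> K \<Longrightarrow> norm x \<le> B"
    using compact_imp_bounded[OF assms] unfolding bounded_iff by blast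
  have "norm W \<le> (\<Sum>k\<in>(UNIV :: 'm set). B)" if "\<forall>k. W $ k \<in> K" for W :: "'a ^ 'm"
  proof -
    have "norm W \<le> (\<Sum>k\<in>UNIV. norm (W $ k))"
      unfolding norm_vec_def by (rule L2_set_le_sum) simp
    also have "\<dots> \<le> (\<Sum>k\<in>(UNIV :: 'm set). B)" by (rule sum_mono) (use that B in blast)
    finally show ?thesis .
  qed
  then have "bounded {W :: 'a ^ 'm. \<forall>k. W $ k \<in> K}"
    unfolding bounded_iff by blast
  ultimately show ?thesis by (simp add: compact_eq_bounded_closed)
qed

lemma nondegenerate_simplex_in_cball:
  fixes x :: "real ^ 'n::finite"
  assumes \<rho>: "\<rho> > 0"
  defines "W \<equiv> \<chi> k. case k of None \<Rightarrow> x | Some i \<Rightarrow> x + \<rho> *\<^sub>R axis i 1"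
  shows "\<forall>k. W $ k \<in> cball x \<rho>" and "det (simplex_matrix W) \<noteq> 0"
proof -
  show "\<forall>k. W $ k \<in> cball x \<rho>"
    using \<rho> unfolding W_def by (auto simp: dist_norm split: option.split)
  have "l = 0" if l: "simplex_matrix W *v l = 0" for l
  proof -
    have sum0: "(\<Sum>k\<in>UNIV. l $ k) = 0"
      using simplex_matrix_mult_None[of W l] l by simp
    have "(\<Sum>k\<in>UNIV. l $ k *\<^sub>R W $ k) $ r = (\<Sum>k\<in>UNIV. l $ k) * x $ r + \<rho> * l $ Some r" for r
      by (simp add: W_def sum_UNIV_option axis_def algebra_simps sum.distrib sum_distrib_left sum_distrib_right
          if_distrib[of "\<lambda>t. _ * t"] cong: if_cong)
    then have "l $ Some r = 0" for r
      using simplex_matrix_mult_Some[of W l r] l sum0 \<rho> by simp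
    moreover then have "l $ None = 0" using sum0 by (simp add: sum_UNIV_option)
    ultimately show ?thesis
      unfolding vec_eq_iff by (metis option.exhaust zero_index)
  qed
  then have "invertible (simplex_matrix W)"
    unfolding invertible_left_inverse matrix_left_invertible_ker by blast
  then show "det (simplex_matrix W) \<noteq> 0" by (simp add: invertible_det_nz)
qed

lemma exists_max_volume_simplex:
  fixes K :: "(real ^ 'n::finite) set"
  assumes K: "compact K" "interior K \<noteq> {}"
  obtains W :: "real ^ 'n ^ ('n option)"
  where "\<forall>k. W $ k \<in> K" "det (simplex_matrix W) \<noteq> 0"
    and "\<And>W'. \<forall>k. W' $ k \<in> K \<Longrightarrow> \<bar>det (simplex_matrix W')\<bar> \<le> \<bar>det (simplex_matrix W)\<bar>"
proof -
  define Ws where "Ws = {W :: real ^ 'n ^ ('n option). \<forall>k. W $ k \<in> K}"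
  obtain x \<rho> where \<rho>: "\<rho> > 0" "cball x \<rho> \<subseteq> K"
    using K(2) mem_interior_cball by blast
  then obtain W1 where W1: "W1 \<in> Ws" "det (simplex_matrix W1) \<noteq> 0"
    using nondegenerate_simplex_in_cball[OF \<rho>(1), of x] unfolding Ws_def by blast
  have "continuous_on Ws (\<lambda>W. \<bar>det (simplex_matrix W)\<bar>)"
    by (intro continuous_on_rabs continuous_on_det_simplex_matrix)
  moreover have "compact Ws" unfolding Ws_def by (rule compact_vertex_tuples[OF K(1)])
  ultimately obtain W where W: "W \<in> Ws" "\<And>W'. W' \<in> Ws \<Longrightarrow> \<bar>det (simplex_matrix W')\<bar> \<le> \<bar>det (simplex_matrix W)\<bar>"
    using continuous_attains_sup[of Ws] W1(1) by blast
  moreover have "det (simplex_matrix W) \<noteq> 0" using W(2)[OF W1(1)] W1(2) by auto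
  ultimately show thesis using that unfolding Ws_def by blast
qed

text \<open>By Cramer's rule, replacing the vertex \<open>W $ k\<close> by \<open>p\<close> multiplies the determinant by the
  \<open>k\<close>-th barycentric coordinate of \<open>p\<close>; maximality bounds it by \<open>1\<close>.\<close>
lemma max_volume_simplex_barycentric:
  fixes W :: "real ^ 'n::finite ^ ('n option)"
  assumes W: "\<forall>k. W $ k \<in> K" "det (simplex_matrix W) \<noteq> 0"
    and max: "\<And>W'. \<forall>k. W' $ k \<in> K \<Longrightarrow> \<bar>det (simplex_matrix W')\<bar> \<le> \<bar>det (simplex_matrix W)\<bar>"
    and p: "p \<in> K"
  obtains l where "\<And>k. \<bar>l $ k\<bar> \<le> 1" "(\<Sum>k\<in>UNIV. l $ k) = 1" "(\<Sum>k\<in>UNIV. l $ k *\<^sub>R W $ k) = p"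
proof -
  let ?M = "simplex_matrix W"
  obtain B where B: "?M ** B = mat 1"
    using W(2) invertible_det_nz invertible_right_inverse by blast
  define b :: "real ^ ('n option)" where "b = (\<chi> i. case i of None \<Rightarrow> 1 | Some r \<Rightarrow> p $ r)"
  define l where "l = B *v b"
  have Ml: "?M *v l = b" unfolding l_def matrix_vector_mul_assoc B by simp
  have sum: "(\<Sum>k\<in>UNIV. l $ k) = 1"
    using simplex_matrix_mult_None[of W l] Ml unfolding b_def by simp
  have comb: "(\<Sum>k\<in>UNIV. l $ k *\<^sub>R W $ k) = p"
    using simplex_matrix_mult_Some[of W l] Ml unfolding b_def by (simp add: vec_eq_iff)
  have "\<bar>l $ k\<bar> \<le> 1" for k
  proof -
    define W' where "W' = (\<chi> m. if m = k then p else W $ m)"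
    have "simplex_matrix W' = (\<chi> i m. if m = k then (?M *v l) $ i else ?M $ i $ m)"
      unfolding Ml by (simp add: vec_eq_iff simplex_matrix_def W'_def b_def split: option.split)
    then have "det (simplex_matrix W') = l $ k * det ?M" by (simp only: cramer_lemma)
    moreover have "\<bar>det (simplex_matrix W')\<bar> \<le> \<bar>det ?M\<bar>"
      by (rule max) (simp add: W'_def W(1) p)
    ultimately have "\<bar>l $ k\<bar> * \<bar>det ?M\<bar> \<le> 1 * \<bar>det ?M\<bar>" by (simp add: abs_mult)
    moreover have "0 < \<bar>det ?M\<bar>" using W(2) by simp
    ultimately show ?thesis by (simp only: mult_le_cancel_right_pos)
  qed
  with sum comb that show thesis by blast
qed

lemma max_volume_simplex_reflection:
  fixes W :: "real ^ 'n::finite ^ ('n option)"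
  assumes K: "convex K" and W: "\<forall>k. W $ k \<in> K" "det (simplex_matrix W) \<noteq> 0"
    and max: "\<And>W'. \<forall>k. W' $ k \<in> K \<Longrightarrow> \<bar>det (simplex_matrix W')\<bar> \<le> \<bar>det (simplex_matrix W)\<bar>"
    and p: "p \<in> K"
  shows "(\<Sum>k\<in>UNIV. W $ k) - p \<in> (*\<^sub>R) (real CARD('n)) ` K"
proof -
  define d where "d = real CARD('n)"
  have d: "d > 0" unfolding d_def by simp
  obtain l where l: "\<And>k. \<bar>l $ k\<bar> \<le> 1" "(\<Sum>k\<in>UNIV. l $ k) = 1" "(\<Sum>k\<in>UNIV. l $ k *\<^sub>R W $ k) = p"
    using max_volume_simplex_barycentric[OF W max p] by blast
  define q where "q = (\<Sum>k\<in>UNIV. ((1 - l $ k) / d) *\<^sub>R W $ k)"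
  have "(\<Sum>k\<in>UNIV. (1 - l $ k) / d) = (real CARD('n option) - 1) / d"
    by (simp add: sum_divide_distrib[symmetric] sum_subtractf l(2))
  then have "(\<Sum>k\<in>UNIV. (1 - l $ k) / d) = 1" using d unfolding d_def by simp
  moreover have "0 \<le> (1 - l $ k) / d" for k using l(1)[of k] d by (simp add: abs_le_iff)
  ultimately have "q \<in> K" unfolding q_def using W(1) by (intro convex_sum[OF _ K]) auto
  moreover have "(\<Sum>k\<in>UNIV. W $ k) - p = d *\<^sub>R q"
    using d l(3) by (simp add: q_def scaleR_sum_right scaleR_diff_left sum_subtractf)
  ultimately show ?thesis unfolding d_def by (intro image_eqI[where x = q])
qed

lemma width_le_of_reflection:
  fixes K :: "(real ^ 'n) set"
  assumes K: "bounded K" "K \<noteq> {}" and c: "c \<ge> 0"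
    and refl: "\<And>p. p \<in> K \<Longrightarrow> z - p \<in> (*\<^sub>R) c ` K"
  shows "width K u \<le> (c + 1) * support_fun K u - z \<bullet> u"
proof -
  have "support_fun K (- u) \<le> c * support_fun K u - z \<bullet> u"
    unfolding support_fun_def[of K "- u"]
  proof (rule cSup_least)
    show "(\<lambda>y. y \<bullet> - u) ` K \<noteq> {}" using K(2) by simp
  next
    fix v assume "v \<in> (\<lambda>y. y \<bullet> - u) ` K"
    then obtain y where y: "y \<in> K" "v = - (y \<bullet> u)" by auto
    obtain q where q: "q \<in> K" "z - y = c *\<^sub>R q" using refl[OF y(1)] by auto
    have "v = c * (q \<bullet> u) - z \<bullet> u"
      using arg_cong[OF q(2), of "\<lambda>x. x \<bullet> u"] y(2) by (simp add: inner_diff_left)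
    also have "\<dots> \<le> c * support_fun K u - z \<bullet> u"
      using inner_le_support_fun[OF K(1) q(1)] c by (simp add: mult_left_mono)
    finally show "v \<le> c * support_fun K u - z \<bullet> u" .
  qed
  then show ?thesis unfolding width_def by (simp add: algebra_simps)
qed

lemma cball_subset_of_support_fun:
  fixes K :: "(real ^ 'n) set"
  assumes K: "closed K" "convex K" "K \<noteq> {}"
    and margin: "\<And>u. norm u = 1 \<Longrightarrow> g \<bullet> u + r \<le> support_fun K u"
  shows "cball g r \<subseteq> K"
proof
  fix z assume z: "z \<in> cball g r"
  show "z \<in> K"
  proof (rule ccontr)
    assume "z \<notin> K"
    then obtain a b where ab: "a \<bullet> z < b" "\<And>x. x \<in> K \<Longrightarrow> a \<bullet> x > b"
      using separating_hyperplane_closed_point[OF K(2,1)] by blast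
    have a: "a \<noteq> 0" using ab K(3) by fastforce
    define u where "u = - (1 / norm a) *\<^sub>R a"
    have u: "norm u = 1" unfolding u_def using a by simp
    have "support_fun K u \<le> - b / norm a"
      unfolding support_fun_def
    proof (rule cSup_least)
      show "(\<lambda>y. y \<bullet> u) ` K \<noteq> {}" using K(3) by simp
    next
      fix v assume "v \<in> (\<lambda>y. y \<bullet> u) ` K"
      then obtain y where y: "y \<in> K" "v = - (a \<bullet> y) / norm a"
        unfolding u_def by (auto simp: inner_commute)
      then show "v \<le> - b / norm a" using ab(2)[OF y(1)] a by (simp add: divide_right_mono)
    qed
    moreover have "- b / norm a < z \<bullet> u"
      using ab(1) a unfolding u_def by (simp add: inner_commute divide_strict_right_mono)
    moreover have "(z - g) \<bullet> u \<le> r"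
      using Cauchy_Schwarz_ineq2[of "z - g" u] u z by (simp add: dist_norm norm_minus_commute)
    ultimately show False using margin[OF u] by (simp add: inner_diff_left)
  qed
qed

text \<open>The centre of the ball is the centroid of a simplex of maximal volume in \<open>K\<close>.\<close>
lemma convex_body_contains_cball:
  fixes K :: "(real ^ 'n) set"
  assumes K: "convex_body K" and width: "\<And>u. norm u = 1 \<Longrightarrow> \<epsilon> \<le> width K u"
  obtains g where "cball g (\<epsilon> / (real CARD('n) + 1)) \<subseteq> K"
proof -
  define d where "d = real CARD('n)"
  have cK: "compact K" and cvx: "convex K" and int: "interior K \<noteq> {}"
    using K unfolding convex_body_def by auto
  have K_ne: "K \<noteq> {}" using int interior_subset by blast
  obtain W where W: "\<forall>k. W $ k \<in> K" "det (simplex_matrix W) \<noteq> 0"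
    and max: "\<And>W'. \<forall>k. W' $ k \<in> K \<Longrightarrow> \<bar>det (simplex_matrix W')\<bar> \<le> \<bar>det (simplex_matrix W)\<bar>"
    using exists_max_volume_simplex[OF cK int] by blast
  define g where "g = (1 / (d + 1)) *\<^sub>R (\<Sum>k\<in>UNIV. W $ k)"
  have "g \<bullet> u + \<epsilon> / (d + 1) \<le> support_fun K u" if u: "norm u = 1" for u
  proof -
    have refl: "(\<Sum>k\<in>UNIV. W $ k) - p \<in> (*\<^sub>R) d ` K" if "p \<in> K" for p
      using max_volume_simplex_reflection[OF cvx W max that] unfolding d_def .
    have "\<epsilon> \<le> width K u" by (rule width[OF u])
    also have "\<dots> \<le> (d + 1) * support_fun K u - (\<Sum>k\<in>UNIV. W $ k) \<bullet> u"
      by (rule width_le_of_reflection) (use cK K_ne refl in \<open>auto simp: d_def compact_imp_bounded\<close>)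
    also have "(\<Sum>k\<in>UNIV. W $ k) = (d + 1) *\<^sub>R g" unfolding g_def d_def by simp
    finally show ?thesis unfolding d_def by (simp add: field_simps inner_add_left)
  qed
  then show thesis
    using that cball_subset_of_support_fun[OF compact_imp_closed[OF cK] cvx K_ne] unfolding d_def by blast
qed

section \<open>Shadows and their neighbourhoods\<close>

lemma bounded_line_meets_frontier:
  fixes K :: "'a::real_normed_vector set"
  assumes K: "bounded K" "y \<in> K" and v: "v \<noteq> 0"
  obtains t where "y + t *\<^sub>R v \<in> frontier K"
proof -
  obtain B where B: "\<And>x. x \<in> K \<Longrightarrow> norm x \<le> B" using K(1) bounded_iff by blast
  define z where "z = y + ((B + norm y + 1) / norm v) *\<^sub>R v"
  have "B + norm y + 1 \<le> norm z + norm y"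
    using norm_triangle_ineq4[of z y] v unfolding z_def
    by (simp add: B[OF K(2)] add_nonneg_nonneg)
  then have "z \<notin> K" using B[of z] by auto
  then obtain w where w: "w \<in> closed_segment y z" "w \<in> frontier K"
    using connected_Int_frontier[OF connected_segment, of y z K] K(2) by auto
  then obtain c where "w = (1 - c) *\<^sub>R y + c *\<^sub>R z" unfolding closed_segment_def by auto
  then have "w = y + (c * ((B + norm y + 1) / norm v)) *\<^sub>R v"
    unfolding z_def by (simp add: algebra_simps)
  with w(2) that show thesis by metis
qed

lemma proj_subset_proj_frontier:
  assumes K: "bounded K"
  shows "proj j ` K \<subseteq> proj j ` frontier K"
proof
  fix x assume "x \<in> proj j ` K"
  then obtain y where y: "y \<in> K" "x = proj j y" by blast
  have "sdir j 1 \<noteq> 0" using norm_sdir[of 1 j] by auto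
  then obtain t where t: "y + t *\<^sub>R sdir j 1 \<in> frontier K"
    using bounded_line_meets_frontier[OF K y(1)] by blast
  have "x = proj j (y + t *\<^sub>R sdir j 1)" using y(2) by simp
  with t show "x \<in> proj j ` frontier K" by blast
qed

text \<open>Scaling about the centre of an inscribed ball by \<open>1 + \<alpha>/r\<close> covers the \<open>\<alpha>\<close>-neighbourhood:
  for \<open>z\<close> with nearest point \<open>p\<close>, the point \<open>z\<close> lies on the ray from \<open>x0\<close> through the convex
  combination of \<open>p\<close> and \<open>x0 + (r/\<alpha>)(z - p)\<close>.\<close>
lemma neighbourhood_subset_homothetic_image:
  fixes P :: "'a::euclidean_space set"
  assumes P: "convex P" "closed P" "P \<subseteq> X" and X: "subspace X" "x0 \<in> X"
    and ball: "cball x0 r \<inter> X \<subseteq> P" and r: "r > 0" and \<alpha>: "\<alpha> > 0"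
  shows "{z \<in> X. infdist z P \<le> \<alpha>} \<subseteq> (\<lambda>p. x0 + (1 + \<alpha> / r) *\<^sub>R (p - x0)) ` P"
proof clarify
  fix z assume z: "z \<in> X" "infdist z P \<le> \<alpha>"
  have "x0 \<in> P" using ball X(2) r by auto
  then obtain p where p: "p \<in> P" "infdist z P = dist z p"
    using infdist_attains_inf[OF P(2)] by blast
  define l where "l = 1 + \<alpha> / r"
  have l: "l > 1" unfolding l_def using \<alpha> r by simp
  define w where "w = x0 + (r / \<alpha>) *\<^sub>R (z - p)"
  have "w \<in> X"
    unfolding w_def using X z(1) p(1) P(3) by (intro subspace_add subspace_mul subspace_diff) auto
  moreover have "dist w x0 \<le> r"
  proof -
    have "dist w x0 = (r / \<alpha>) * dist z p" unfolding w_def using r \<alpha> by (simp add: dist_norm)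
    also have "\<dots> \<le> (r / \<alpha>) * \<alpha>" using z(2) p(2) r \<alpha> by (intro mult_left_mono) simp_all
    finally show ?thesis using \<alpha> by simp
  qed
  ultimately have "w \<in> P" using ball by (auto simp: dist_commute)
  define q where "q = (1 / l) *\<^sub>R p + (1 - 1 / l) *\<^sub>R w"
  have "q \<in> P" unfolding q_def
    using P(1) p(1) \<open>w \<in> P\<close> l unfolding convex_def by auto
  moreover have "z = x0 + l *\<^sub>R (q - x0)"
  proof -
    have "l *\<^sub>R q = p + (l - 1) *\<^sub>R w" unfolding q_def using l by (simp add: algebra_simps)
    also have "(l - 1) *\<^sub>R w = (\<alpha> / r) *\<^sub>R x0 + (z - p)"
      unfolding w_def l_def using r \<alpha> by (simp add: algebra_simps)
    finally show ?thesis unfolding l_def by (simp add: algebra_simps)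
  qed
  ultimately show "z \<in> (\<lambda>p. x0 + (1 + \<alpha> / r) *\<^sub>R (p - x0)) ` P" unfolding l_def by blast
qed

lemma homothety_lipschitz:
  fixes x0 :: "'a::real_normed_vector"
  assumes "c \<ge> 0"
  shows "c-lipschitz_on A (\<lambda>p. x0 + c *\<^sub>R (p - x0))"
proof (rule lipschitz_onI)
  fix x y :: 'a
  have "x0 + c *\<^sub>R (x - x0) - (x0 + c *\<^sub>R (y - x0)) = c *\<^sub>R (x - y)"
    by (simp add: algebra_simps)
  then show "dist (x0 + c *\<^sub>R (x - x0)) (x0 + c *\<^sub>R (y - x0)) \<le> c * dist x y"
    using assms by (simp add: dist_norm)
qed (rule assms)

lemma cball_proj_subset_proj:
  assumes "cball g r \<subseteq> K"
  shows "cball (proj j g) r \<inter> {x. x $ j = 0} \<subseteq> proj j ` K"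
proof clarify
  fix w assume w: "w \<in> cball (proj j g) r" "w $ j = 0"
  define z where "z = w + (g $ j) *\<^sub>R sdir j 1"
  have "proj j w = w" using w(2) by (simp add: vec_eq_iff proj_nth)
  then have proj_z: "proj j z = w" unfolding z_def by simp
  have "z - g = w - proj j g" unfolding z_def using w(2) by (auto simp: vec_eq_iff proj_nth sdir_nth)
  then have "dist g z = dist (proj j g) w" by (metis dist_norm dist_commute)
  then have "z \<in> K" using w(1) assms by auto
  with proj_z show "w \<in> proj j ` K" by blast
qed

lemma thicken_proj_subset_homothetic_image:
  fixes K :: "(real ^ 'n) set"
  assumes K: "compact K" "convex K" and g: "cball g r \<subseteq> K" and r: "r > 0" and \<alpha>: "\<alpha> > 0"
  shows "thicken j (proj j ` K) \<alpha> \<subseteq> (\<lambda>p. proj j g + (1 + \<alpha> / r) *\<^sub>R (p - proj j g)) ` proj j ` K"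
proof -
  have "thicken j (proj j ` K) \<alpha> = {z \<in> {x. x $ j = 0}. infdist z (proj j ` K) \<le> \<alpha>}"
    unfolding thicken_def by auto
  also have "\<dots> \<subseteq> (\<lambda>p. proj j g + (1 + \<alpha> / r) *\<^sub>R (p - proj j g)) ` proj j ` K"
  proof (rule neighbourhood_subset_homothetic_image)
    show "convex (proj j ` K)" by (rule convex_linear_image[OF linear_proj K(2)])
    show "closed (proj j ` K)"
      by (intro compact_imp_closed compact_continuous_image[OF _ K(1)] linear_continuous_on
          linear_conv_bounded_linear[THEN iffD1, OF linear_proj])
    show "cball (proj j g) r \<inter> {x. x $ j = 0} \<subseteq> proj j ` K"
      by (rule cball_proj_subset_proj[OF g])
    show "proj j ` K \<subseteq> {x. x $ j = 0}" by (auto simp: proj_nth)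
    show "subspace {x :: real ^ 'n. x $ j = 0}" by (simp add: subspace_def)
  qed (use r \<alpha> in \<open>simp_all add: proj_nth\<close>)
  finally show ?thesis .
qed

lemma lower_boundary_subset_lipschitz_image:
  fixes K :: "(real ^ 'n) set"
  assumes K: "convex_body K" and \<epsilon>: "\<epsilon> > 0"
    and width: "\<And>u. norm u = 1 \<Longrightarrow> \<epsilon> \<le> width K u" and s: "s = 1 \<or> s = -1"
  obtains G where "((1 + sqrt (real CARD('n))) * (2 * real CARD('n) + 3))-lipschitz_on (frontier K) G"
    and "lower_boundary j (Kalpha K j s (2 * \<epsilon>)) \<subseteq> G ` frontier K"
proof -
  define d where "d = real CARD('n)"
  define r where "r = \<epsilon> / (d + 1)"
  have r: "r > 0" and ratio: "1 + 2 * \<epsilon> / r = 2 * d + 3"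
    unfolding r_def d_def using \<epsilon> by (simp_all add: field_simps)
  have cK: "compact K" and cvx: "convex K" and K_ne: "K \<noteq> {}"
    using K interior_subset unfolding convex_body_def by auto
  obtain g where g: "cball g r \<subseteq> K"
    using convex_body_contains_cball[OF K width] unfolding r_def d_def by blast
  define hom where "hom = (\<lambda>p. proj j g + (2 * d + 3) *\<^sub>R (p - proj j g))"
  have "lower_boundary j (Kalpha K j s (2 * \<epsilon>)) \<subseteq> Sreg_graph K j s ` thicken j (proj j ` K) (2 * \<epsilon>)"
    by (rule lower_boundary_Kalpha_subset_graph[OF s])
  also have "\<dots> \<subseteq> Sreg_graph K j s ` hom ` proj j ` K"
    using thicken_proj_subset_homothetic_image[OF cK cvx g r, of "2 * \<epsilon>" j] \<epsilon>
    unfolding hom_def ratio by (intro image_mono) simp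
  also have "\<dots> \<subseteq> Sreg_graph K j s ` hom ` proj j ` frontier K"
    by (intro image_mono proj_subset_proj_frontier compact_imp_bounded cK)
  also have "\<dots> = (Sreg_graph K j s \<circ> hom \<circ> proj j) ` frontier K" by (simp add: image_comp)
  finally have sub:
    "lower_boundary j (Kalpha K j s (2 * \<epsilon>)) \<subseteq> (Sreg_graph K j s \<circ> hom \<circ> proj j) ` frontier K" .
  have "(2 * d + 3)-lipschitz_on (proj j ` frontier K) hom"
    unfolding hom_def d_def by (rule homothety_lipschitz) simp
  with proj_lipschitz have "((2 * d + 3) * 1)-lipschitz_on (frontier K) (hom \<circ> proj j)"
    by (rule lipschitz_on_compose)
  moreover have "(1 + sqrt d)-lipschitz_on ((hom \<circ> proj j) ` frontier K) (Sreg_graph K j s)"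
    unfolding d_def by (rule Sreg_graph_lipschitz[OF compact_imp_bounded[OF cK] K_ne s])
  ultimately have lip:
    "((1 + sqrt d) * (2 * d + 3))-lipschitz_on (frontier K) (Sreg_graph K j s \<circ> hom \<circ> proj j)"
    using lipschitz_on_compose by (fastforce simp: comp_assoc)
  from that[OF lip[unfolded d_def] sub] show thesis .
qed

theorem lemma1:
  shows "\<exists>C::real. C \<ge> 0 \<and>
    (\<forall>(K :: (real ^ 'n) set) (\<epsilon>::real) (j::'n) (s::real).
       convex_body K \<and> \<epsilon> > 0 \<and> (\<forall>u. norm u = 1 \<longrightarrow> width K u \<ge> \<epsilon>) \<and> (j, s) \<in> Ipm
       \<longrightarrow> area (lower_boundary j (Kalpha K j s (2 * \<epsilon>))) \<le> ennreal C * area (frontier K))"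
proof -
  define M where "M = (1 + sqrt (real CARD('n))) * (2 * real CARD('n) + 3)"
  have "1 * 1 \<le> M" unfolding M_def by (intro mult_mono) auto
  then have M: "M \<ge> 1" by simp
  show ?thesis
  proof (intro exI[of _ "M ^ (CARD('n) - 1)"] conjI allI impI)
    show "M ^ (CARD('n) - 1) \<ge> 0" using M by simp
    fix K :: "(real ^ 'n) set" and \<epsilon> :: real and j :: 'n and s :: real
    assume "convex_body K \<and> \<epsilon> > 0 \<and> (\<forall>u. norm u = 1 \<longrightarrow> width K u \<ge> \<epsilon>) \<and> (j, s) \<in> Ipm"
    then obtain G where G: "M-lipschitz_on (frontier K) G"
      and sub: "lower_boundary j (Kalpha K j s (2 * \<epsilon>)) \<subseteq> G ` frontier K"
      using lower_boundary_subset_lipschitz_image[of K \<epsilon> s j] unfolding M_def by auto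
    have "area (lower_boundary j (Kalpha K j s (2 * \<epsilon>))) \<le> area (G ` frontier K)"
      unfolding area_def by (rule hausdorff_measure_mono[OF sub])
    also have "\<dots> \<le> ennreal (M ^ (CARD('n) - 1)) * area (frontier K)"
      unfolding area_def by (rule hausdorff_measure_lipschitz_image[OF G M])
    finally show "area (lower_boundary j (Kalpha K j s (2 * \<epsilon>))) \<le> ennreal (M ^ (CARD('n) - 1)) * area (frontier K)" .
  qed
qed

end
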